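(* For all parameters $a,b,a',b'$ and indeterminates $x_i,x_j$, \[ R_{12}(x_i,x_j)\,T_1(x_i;a,b)\,T_2(x_j;a',b')=T_2(x_j;a',b')\,T_1(x_i;a,b)\,R_{12}(x_i,x_j), \] where $R(x_i,x_j)$ is the matrix $R(\omega)$ with weights $\omega_1=bx_i+a'x_j$, $\omega_2=ax_i+b'x_j$, $\omega_3=-ax_i+a'x_j$, $\omega_4=bx_i-b'x_j$, $\omega_5=(a'+b')x_j$, $\omega_6=(a+b)x_i$.
   Context: Let $V=\mathbb{C}v_0\oplus\mathbb{C}v_1$ with matrix units $e_{ab}$ ($e_{ab}v_c=\delta_{bc}v_a$). For weights $\omega=(\omega_1,\dots,\omega_6)$ put $R(\omega)=e_{00}\otimes(\omega_1e_{00}+\omega_3e_{11})+e_{01}\otimes\omega_5e_{10}+e_{10}\otimes\omega_6e_{01}+e_{11}\otimes(\omega_4e_{00}+\omega_2e_{11})\in\operatorname{End}(V\otimes V)$. For the quantum space $V^{\otimes n}$ and an auxiliary space $V_s$ ($s=1,2$, copies of $V$), $T_s(x;a,b)=R_{sn}(\omega)\cdots R_{s1}(\omega)\in\operatorname{End}(V_s\otimes V^{\otimes n})$ with $\omega_1=\omega_3=\omega_5=1$, $\omega_2=ax$, $\omega_4=bx$, $\omega_6=(a+b)x$; $R_{sj}$ acts as $R$ on $V_s$ and the $j$-th factor of $V^{\otimes n}$, and $R_{12}$ acts as $R$ on $V_1\otimes V_2$. The identity is in $\operatorname{End}(V_1\otimes V_2\otimes V^{\otimes n})$. *)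

theory Defs
  imports Complex_Main
begin

text \<open>Basis of V: v_0 ~ False, v_1 ~ True.  The global space
  V_1 \<otimes> V_2 \<otimes> V^{\<otimes>n} has basis the bool lists of length n+2:
  position 0 is V_1, position 1 is V_2, position j+1 is the j-th
  quantum factor (1 \<le> j \<le> n).\<close>

type_synonym op = "bool list \<Rightarrow> bool list \<Rightarrow> complex"

definition states :: "nat \<Rightarrow> bool list set" where
  "states n = {l. length l = n + 2}"

definition Rent :: "(nat \<Rightarrow> complex) \<Rightarrow> bool \<Rightarrow> bool \<Rightarrow> bool \<Rightarrow> bool \<Rightarrow> complex" where
  "Rent w r1 r2 c1 c2 =
     (if (r1, r2) = (False, False) \<and> (c1, c2) = (False, False) then w 1
      else if (r1, r2) = (False, True) \<and> (c1, c2) = (False, True) then w 3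
      else if (r1, r2) = (False, True) \<and> (c1, c2) = (True, False) then w 5
      else if (r1, r2) = (True, False) \<and> (c1, c2) = (False, True) then w 6
      else if (r1, r2) = (True, False) \<and> (c1, c2) = (True, False) then w 4
      else if (r1, r2) = (True, True) \<and> (c1, c2) = (True, True) then w 2
      else 0)"

definition op2 :: "(nat \<Rightarrow> complex) \<Rightarrow> nat \<Rightarrow> nat \<Rightarrow> op" where
  "op2 w p q s t =
     (if length s = length t \<and> (\<forall>k<length s. k \<noteq> p \<and> k \<noteq> q \<longrightarrow> s ! k = t ! k)
      then Rent w (s ! p) (s ! q) (t ! p) (t ! q) else 0)"

definition idop :: op where
  "idop s t = (if s = t then 1 else 0)"

definition mult :: "nat \<Rightarrow> op \<Rightarrow> op \<Rightarrow> op" where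
  "mult n A B s t = (\<Sum>u\<in>states n. A s u * B u t)"

fun prodL :: "nat \<Rightarrow> op list \<Rightarrow> op" where
  "prodL n [] = idop"
| "prodL n (A # As) = mult n A (prodL n As)"

definition Tw :: "complex \<Rightarrow> complex \<Rightarrow> complex \<Rightarrow> nat \<Rightarrow> complex" where
  "Tw x a b k = (if k = 1 \<or> k = 3 \<or> k = 5 then 1
                 else if k = 2 then a * x else if k = 4 then b * x
                 else if k = 6 then (a + b) * x else 0)"

text \<open>T_s(x;a,b) = R_{sn} ... R_{s1} with auxiliary slot s (position s-1).\<close>
definition Tmon :: "nat \<Rightarrow> nat \<Rightarrow> complex \<Rightarrow> complex \<Rightarrow> complex \<Rightarrow> op" where
  "Tmon n s x a b = prodL n (map (\<lambda>j. op2 (Tw x a b) (s - 1) (j + 1)) (rev [1..<n+1]))"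

definition R12w :: "complex \<Rightarrow> complex \<Rightarrow> complex \<Rightarrow> complex \<Rightarrow> complex \<Rightarrow> complex \<Rightarrow> nat \<Rightarrow> complex" where
  "R12w xi xj a b a' b' k =
     (if k = 1 then b * xi + a' * xj
      else if k = 2 then a * xi + b' * xj
      else if k = 3 then - a * xi + a' * xj
      else if k = 4 then b * xi - b' * xj
      else if k = 5 then (a' + b') * xj
      else if k = 6 then (a + b) * xi else 0)"

end

theory Submission
  imports Defs
begin

(* Both monodromy matrices are ordered products of local R-matrices, one per quantum site j.
   At a single site the claim is the RLL relation R_12 R_1j R_2j = R_2j R_1j R_12 on three
   copies of V, a finite computation with the given weights. Local operators on disjoint pairs
   of sites commute, so R_12 can be pushed through the two products one site at a time
   (the train argument). *)

lemma finite_states: "finite (states n)"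
  unfolding states_def using finite_lists_length_eq[of "UNIV :: bool set"] by simp

lemma mult_assoc: "mult n (mult n A B) C = mult n A (mult n B C)"
  unfolding mult_def sum_distrib_left sum_distrib_right
  by (intro ext, subst sum.swap) (simp add: mult.assoc)

(* Off states n the entries of an operator are junk (mult n idop A differs from A there), so
   operator identities are only claimed on states n. *)
definition eq_on_states :: "nat \<Rightarrow> op \<Rightarrow> op \<Rightarrow> bool" where
  "eq_on_states n A B \<longleftrightarrow> (\<forall>s\<in>states n. \<forall>t\<in>states n. A s t = B s t)"

lemma eq_on_states_refl [simp]: "eq_on_states n A A"
  by (simp add: eq_on_states_def)

lemma eq_on_states_sym: "eq_on_states n A B \<Longrightarrow> eq_on_states n B A"
  by (simp add: eq_on_states_def)

lemma eq_on_states_trans [trans]: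
  "eq_on_states n A B \<Longrightarrow> eq_on_states n B C \<Longrightarrow> eq_on_states n A C"
  by (simp add: eq_on_states_def)

lemma eq_eq_on_states_trans [trans]:
  "A = B \<Longrightarrow> eq_on_states n B C \<Longrightarrow> eq_on_states n A C"
  by simp

lemma eq_on_states_eq_trans [trans]:
  "eq_on_states n A B \<Longrightarrow> B = C \<Longrightarrow> eq_on_states n A C"
  by simp

lemma eq_on_states_mult:
  "eq_on_states n A A' \<Longrightarrow> eq_on_states n B B' \<Longrightarrow> eq_on_states n (mult n A B) (mult n A' B')"
  unfolding eq_on_states_def mult_def by (intro ballI sum.cong) auto

lemma mult_idop_left: "eq_on_states n (mult n idop A) A"
proof -
  have "mult n idop A s t = (\<Sum>u\<in>states n. if s = u then A u t else 0)" for s t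
    unfolding mult_def idop_def by (intro sum.cong) simp_all
  then show ?thesis
    by (simp add: eq_on_states_def finite_states)
qed

lemma mult_idop_right: "eq_on_states n (mult n A idop) A"
proof -
  have "mult n A idop s t = (\<Sum>u\<in>states n. if u = t then A s u else 0)" for s t
    unfolding mult_def idop_def by (intro sum.cong) simp_all
  then show ?thesis
    by (simp add: eq_on_states_def finite_states)
qed

definition ops_commute :: "nat \<Rightarrow> op \<Rightarrow> op \<Rightarrow> bool" where
  "ops_commute n A B \<longleftrightarrow> eq_on_states n (mult n A B) (mult n B A)"

lemma ops_commute_sym: "ops_commute n A B \<Longrightarrow> ops_commute n B A"
  by (simp add: ops_commute_def eq_on_states_sym)

lemma ops_commute_swap:
  assumes "ops_commute n A B"
  shows "eq_on_states n (mult n A (mult n B C)) (mult n B (mult n A C))"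
proof -
  have "mult n A (mult n B C) = mult n (mult n A B) C"
    by (simp add: mult_assoc)
  also have "eq_on_states n \<dots> (mult n (mult n B A) C)"
    using assms by (intro eq_on_states_mult[OF _ eq_on_states_refl]) (simp add: ops_commute_def)
  also have "mult n (mult n B A) C = mult n B (mult n A C)"
    by (simp add: mult_assoc)
  finally show ?thesis .
qed

lemma ops_commute_prodL:
  assumes "\<forall>B\<in>set Bs. ops_commute n A B"
  shows "ops_commute n A (prodL n Bs)"
  using assms
proof (induction Bs)
  case Nil
  show ?case
    unfolding ops_commute_def prodL.simps
    using mult_idop_right eq_on_states_sym[OF mult_idop_left] by (rule eq_on_states_trans)
next
  case (Cons B Bs)
  have "eq_on_states n (mult n A (mult n B (prodL n Bs))) (mult n B (mult n A (prodL n Bs)))"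
    using Cons.prems by (intro ops_commute_swap) simp
  also have "eq_on_states n \<dots> (mult n B (mult n (prodL n Bs) A))"
    using Cons by (intro eq_on_states_mult[OF eq_on_states_refl]) (simp add: ops_commute_def)
  also have "mult n B (mult n (prodL n Bs) A) = mult n (mult n B (prodL n Bs)) A"
    by (simp add: mult_assoc)
  finally show ?case
    by (simp add: ops_commute_def)
qed

lemma RLL_prodL:
  assumes "distinct L"
    and "\<And>j. j \<in> set L \<Longrightarrow>
      eq_on_states n (mult n (mult n R (A j)) (B j)) (mult n (mult n (B j) (A j)) R)"
    and "\<And>j k. j \<in> set L \<Longrightarrow> k \<in> set L \<Longrightarrow> j \<noteq> k \<Longrightarrow> ops_commute n (A j) (B k)"
  shows "eq_on_states n (mult n (mult n R (prodL n (map A L))) (prodL n (map B L)))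
                        (mult n (mult n (prodL n (map B L)) (prodL n (map A L))) R)"
  using assms
proof (induction L)
  case Nil
  have right: "eq_on_states n (mult n (mult n R idop) idop) R"
    using mult_idop_right mult_idop_right by (rule eq_on_states_trans)
  have left: "eq_on_states n (mult n (mult n idop idop) R) R"
    using eq_on_states_mult[OF mult_idop_left eq_on_states_refl] mult_idop_left
    by (rule eq_on_states_trans)
  show ?case
    using eq_on_states_trans[OF right eq_on_states_sym[OF left]] by simp
next
  case (Cons j L)
  let ?A = "prodL n (map A L)" and ?B = "prodL n (map B L)"
  have IH: "eq_on_states n (mult n (mult n R ?A) ?B) (mult n (mult n ?B ?A) R)"
    using Cons by simp
  have "ops_commute n (B j) (A k)" if "k \<in> set L" for k
    using that Cons.prems by (intro ops_commute_sym[of n "A k"]) auto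
  then have B_A: "ops_commute n ?A (B j)"
    by (intro ops_commute_sym[of n "B j"] ops_commute_prodL) simp
  have A_B: "ops_commute n (A j) ?B"
    using Cons.prems by (intro ops_commute_prodL) auto
  have RAB: "eq_on_states n (mult n (mult n R (A j)) (B j)) (mult n (mult n (B j) (A j)) R)"
    using Cons.prems by simp
  have "mult n (mult n R (mult n (A j) ?A)) (mult n (B j) ?B)
      = mult n R (mult n (A j) (mult n ?A (mult n (B j) ?B)))"
    by (simp add: mult_assoc)
  also have "eq_on_states n \<dots> (mult n R (mult n (A j) (mult n (B j) (mult n ?A ?B))))"
    using B_A by (intro eq_on_states_mult[OF eq_on_states_refl] ops_commute_swap)
  also have "\<dots> = mult n (mult n (mult n R (A j)) (B j)) (mult n ?A ?B)"
    by (simp add: mult_assoc)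
  also have "eq_on_states n \<dots> (mult n (mult n (mult n (B j) (A j)) R) (mult n ?A ?B))"
    using RAB by (rule eq_on_states_mult[OF _ eq_on_states_refl])
  also have "\<dots> = mult n (mult n (B j) (A j)) (mult n (mult n R ?A) ?B)"
    by (simp add: mult_assoc)
  also have "eq_on_states n \<dots> (mult n (mult n (B j) (A j)) (mult n (mult n ?B ?A) R))"
    using IH by (rule eq_on_states_mult[OF eq_on_states_refl])
  also have "\<dots> = mult n (B j) (mult n (A j) (mult n ?B (mult n ?A R)))"
    by (simp add: mult_assoc)
  also have "eq_on_states n \<dots> (mult n (B j) (mult n ?B (mult n (A j) (mult n ?A R))))"
    using A_B by (intro eq_on_states_mult[OF eq_on_states_refl] ops_commute_swap)
  also have "\<dots> = mult n (mult n (mult n (B j) ?B) (mult n (A j) ?A)) R"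
    by (simp add: mult_assoc)
  finally show ?case
    by simp
qed

definition agree_outside :: "nat set \<Rightarrow> bool list \<Rightarrow> bool list \<Rightarrow> bool" where
  "agree_outside S s t \<longleftrightarrow> (\<forall>k<length s. k \<notin> S \<longrightarrow> s ! k = t ! k)"

lemma agree_outside_update:
  assumes "k < length s"
  shows "agree_outside S (s[k := x]) t \<longleftrightarrow> agree_outside (insert k S) s t \<and> (k \<in> S \<or> x = t ! k)"
  using assms unfolding agree_outside_def by (auto simp: nth_list_update)

lemma op2_eq:
  "op2 w p q s t =
     (if length s = length t \<and> agree_outside {p, q} s t
      then Rent w (s ! p) (s ! q) (t ! p) (t ! q) else 0)"
  by (simp add: op2_def agree_outside_def)

lemma op2_update:
  assumes "p < length s" "q < length s" "p \<noteq> q"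
  shows "op2 w p q s (s[p := c1, q := c2]) = Rent w (s ! p) (s ! q) c1 c2"
  using assms by (simp add: op2_eq agree_outside_def nth_list_update)

lemma op2_nonzero_update:
  assumes "op2 w p q s u \<noteq> 0"
  shows "u = s[p := u ! p, q := u ! q]"
proof -
  have "length s = length u" and "agree_outside {p, q} s u"
    using assms by (auto simp: op2_eq split: if_splits)
  show ?thesis
  proof (rule nth_equalityI)
    fix i
    assume "i < length u"
    then show "u ! i = s[p := u ! p, q := u ! q] ! i"
      using \<open>length s = length u\<close> \<open>agree_outside {p, q} s u\<close>
      by (cases "i = q"; cases "i = p") (auto simp: agree_outside_def)
  qed (simp add: \<open>length s = length u\<close>)
qed

lemma mult_op2_left:
  assumes s: "s \<in> states n" and "p < n + 2" "q < n + 2" "p \<noteq> q"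
  shows "mult n (op2 w p q) B s t =
    (\<Sum>c1\<in>UNIV. \<Sum>c2\<in>UNIV. Rent w (s ! p) (s ! q) c1 c2 * B (s[p := c1, q := c2]) t)"
proof -
  define g where "g = (\<lambda>(c1, c2). s[p := c1, q := c2])"
  have len: "length s = n + 2"
    using s by (simp add: states_def)
  have "inj g"
  proof (rule injI)
    fix x y
    assume "g x = g y"
    then have "g x ! p = g y ! p" "g x ! q = g y ! q"
      by simp_all
    then show "x = y"
      using assms len by (cases x; cases y) (simp add: g_def nth_list_update)
  qed
  have "g ` UNIV \<subseteq> states n"
    using len by (auto simp: g_def states_def)
  moreover have "op2 w p q s u = 0" if "u \<notin> g ` UNIV" for u
  proof (rule ccontr)
    assume "op2 w p q s u \<noteq> 0"
    then have "u = g (u ! p, u ! q)"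
      unfolding g_def prod.case by (rule op2_nonzero_update)
    with that show False
      by blast
  qed
  ultimately have "mult n (op2 w p q) B s t = (\<Sum>u\<in>g ` UNIV. op2 w p q s u * B u t)"
    unfolding mult_def by (intro sum.mono_neutral_right finite_states) auto
  also have "\<dots> = (\<Sum>x\<in>UNIV. op2 w p q s (g x) * B (g x) t)"
    using \<open>inj g\<close> by (simp add: sum.reindex)
  also have "\<dots> = (\<Sum>(c1, c2)\<in>UNIV. Rent w (s ! p) (s ! q) c1 c2 * B (s[p := c1, q := c2]) t)"
    using assms len by (intro sum.cong) (auto simp: g_def op2_update)
  finally show ?thesis
    by (simp only: sum.cartesian_product UNIV_Times_UNIV)
qed

lemma states_update: "s \<in> states n \<Longrightarrow> s[k := x] \<in> states n"
  by (simp add: states_def)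

lemma mult_op2_disjoint:
  assumes s: "s \<in> states n" and t: "t \<in> states n"
    and "p < n + 2" "q < n + 2" "p' < n + 2" "q' < n + 2"
    and "p \<noteq> q" and "{p, q} \<inter> {p', q'} = {}"
  shows "mult n (op2 w p q) (op2 v p' q') s t =
    (if agree_outside {p, q, p', q'} s t
     then Rent w (s ! p) (s ! q) (t ! p) (t ! q) * Rent v (s ! p') (s ! q') (t ! p') (t ! q') else 0)"
proof -
  have len: "length s = n + 2" "length t = n + 2"
    using s t by (simp_all add: states_def)
  have "op2 v p' q' (s[p := c1, q := c2]) t =
      (if agree_outside {p, q, p', q'} s t \<and> c1 = t ! p \<and> c2 = t ! q
       then Rent v (s ! p') (s ! q') (t ! p') (t ! q') else 0)" for c1 c2
    using assms len by (auto simp: op2_eq agree_outside_update insert_commute)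
  then show ?thesis
    using assms by (simp add: mult_op2_left UNIV_bool)
qed

lemma op2_commute:
  assumes "p < n + 2" "q < n + 2" "p' < n + 2" "q' < n + 2"
    and "p \<noteq> q" "p' \<noteq> q'" and "{p, q} \<inter> {p', q'} = {}"
  shows "ops_commute n (op2 w p q) (op2 v p' q')"
proof -
  have "{p', q', p, q} = {p, q, p', q'}"
    by auto
  then show ?thesis
    using assms by (auto simp: ops_commute_def eq_on_states_def mult_op2_disjoint)
qed

lemma mult_op2_pq_pr_qr:
  assumes s: "s \<in> states n" and t: "t \<in> states n"
    and "p < n + 2" "q < n + 2" "r < n + 2" and "distinct [p, q, r]"
  shows "mult n (mult n (op2 u p q) (op2 v p r)) (op2 w q r) s t =
    (if agree_outside {p, q, r} s t
     then \<Sum>c1\<in>UNIV. \<Sum>c2\<in>UNIV. \<Sum>d\<in>UNIV.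
       Rent u (s ! p) (s ! q) c1 c2 * Rent v c1 (s ! r) (t ! p) d * Rent w c2 d (t ! q) (t ! r)
     else 0)"
proof -
  have len: "length s = n + 2" "length t = n + 2"
    using s t by (simp_all add: states_def)
  have "op2 w q r (s[p := c1, q := c2, p := d1, r := d2]) t =
      (if agree_outside {p, q, r} s t \<and> d1 = t ! p then Rent w c2 d2 (t ! q) (t ! r) else 0)"
    for c1 c2 d1 d2
    using assms len by (auto simp: op2_eq agree_outside_update insert_commute nth_list_update)
  then have "mult n (op2 v p r) (op2 w q r) (s[p := c1, q := c2]) t =
      (if agree_outside {p, q, r} s t
       then \<Sum>d\<in>UNIV. Rent v c1 (s ! r) (t ! p) d * Rent w c2 d (t ! q) (t ! r) else 0)"
    for c1 c2
    using assms len by (simp add: mult_op2_left states_update nth_list_update UNIV_bool)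
  then show ?thesis
    using assms by (simp add: mult_assoc mult_op2_left sum_distrib_left mult.assoc)
qed

lemma mult_op2_qr_pr_pq:
  assumes s: "s \<in> states n" and t: "t \<in> states n"
    and "p < n + 2" "q < n + 2" "r < n + 2" and "distinct [p, q, r]"
  shows "mult n (mult n (op2 w q r) (op2 v p r)) (op2 u p q) s t =
    (if agree_outside {p, q, r} s t
     then \<Sum>c1\<in>UNIV. \<Sum>c2\<in>UNIV. \<Sum>d\<in>UNIV.
       Rent w (s ! q) (s ! r) c1 c2 * Rent v (s ! p) c2 d (t ! r) * Rent u d c1 (t ! p) (t ! q)
     else 0)"
proof -
  have len: "length s = n + 2" "length t = n + 2"
    using s t by (simp_all add: states_def)
  have "op2 u p q (s[q := c1, r := c2, p := d1, r := d2]) t =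
      (if agree_outside {p, q, r} s t \<and> d2 = t ! r then Rent u d1 c1 (t ! p) (t ! q) else 0)"
    for c1 c2 d1 d2
    using assms len by (auto simp: op2_eq agree_outside_update insert_commute nth_list_update)
  then have "mult n (op2 v p r) (op2 u p q) (s[q := c1, r := c2]) t =
      (if agree_outside {p, q, r} s t
       then \<Sum>d\<in>UNIV. Rent v (s ! p) c2 d (t ! r) * Rent u d c1 (t ! p) (t ! q) else 0)"
    for c1 c2
    using assms len by (simp add: mult_op2_left states_update nth_list_update UNIV_bool)
  then show ?thesis
    using assms by (simp add: mult_assoc mult_op2_left sum_distrib_left mult.assoc)
qed

(* Entrywise form of u_12 v_13 w_23 = w_23 v_13 u_12 on V \<otimes> V \<otimes> V. *)
definition RLL_relation :: "(nat \<Rightarrow> complex) \<Rightarrow> (nat \<Rightarrow> complex) \<Rightarrow> (nat \<Rightarrow> complex) \<Rightarrow> bool" where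
  "RLL_relation u v w \<longleftrightarrow> (\<forall>s0 s1 s2 t0 t1 t2.
     (\<Sum>c1\<in>UNIV. \<Sum>c2\<in>UNIV. \<Sum>d\<in>UNIV. Rent u s0 s1 c1 c2 * Rent v c1 s2 t0 d * Rent w c2 d t1 t2) =
     (\<Sum>c1\<in>UNIV. \<Sum>c2\<in>UNIV. \<Sum>d\<in>UNIV. Rent w s1 s2 c1 c2 * Rent v s0 c2 d t2 * Rent u d c1 t0 t1))"

lemma RLL_relation_op2:
  assumes "RLL_relation u v w"
    and "p < n + 2" "q < n + 2" "r < n + 2" and "distinct [p, q, r]"
  shows "eq_on_states n (mult n (mult n (op2 u p q) (op2 v p r)) (op2 w q r))
                        (mult n (mult n (op2 w q r) (op2 v p r)) (op2 u p q))"
  using assms by (simp add: eq_on_states_def mult_op2_pq_pr_qr mult_op2_qr_pr_pq RLL_relation_def)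

lemma RLL_relation_R12w_Tw: "RLL_relation (R12w xi xj a b a' b') (Tw xi a b) (Tw xj a' b')"
  unfolding RLL_relation_def all_bool_eq
  by (simp add: UNIV_bool Rent_def R12w_def Tw_def algebra_simps)

theorem proposition4p15:
  fixes n :: nat and a b a' b' xi xj :: complex
  assumes "s \<in> states n" and "t \<in> states n"
  shows "mult n (mult n (op2 (R12w xi xj a b a' b') 0 1) (Tmon n 1 xi a b)) (Tmon n 2 xj a' b') s t
       = mult n (mult n (Tmon n 2 xj a' b') (Tmon n 1 xi a b)) (op2 (R12w xi xj a b a' b') 0 1) s t"
proof -
  let ?R = "op2 (R12w xi xj a b a' b') 0 1" and ?sites = "rev [1..<n + 1]"
  define A where "A = (\<lambda>j. op2 (Tw xi a b) 0 (j + 1))"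
  define B where "B = (\<lambda>j. op2 (Tw xj a' b') 1 (j + 1))"
  have monodromy: "Tmon n 1 xi a b = prodL n (map A ?sites)" "Tmon n 2 xj a' b' = prodL n (map B ?sites)"
    unfolding Tmon_def A_def B_def by simp_all
  have "eq_on_states n (mult n (mult n ?R (A j)) (B j)) (mult n (mult n (B j) (A j)) ?R)"
    if "j \<in> set ?sites" for j
    using that unfolding A_def B_def by (intro RLL_relation_op2 RLL_relation_R12w_Tw) auto
  moreover have "ops_commute n (A j) (B k)" if "j \<in> set ?sites" "k \<in> set ?sites" "j \<noteq> k" for j k
    using that unfolding A_def B_def by (intro op2_commute) auto
  ultimately have "eq_on_states n (mult n (mult n ?R (Tmon n 1 xi a b)) (Tmon n 2 xj a' b'))
                                  (mult n (mult n (Tmon n 2 xj a' b') (Tmon n 1 xi a b)) ?R)"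
    unfolding monodromy by (intro RLL_prodL) simp_all
  then show ?thesis
    using assms by (simp add: eq_on_states_def)
qed

end
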